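(* Let $\alpha>-1$ and let $\phi(w)=aw+b$ with $a\in(0,1)$ and $\mathrm{Re}(b)\ge 0$. For each $f\in\mathcal{A}^2_\alpha(\mathbb{C}_+)$ there exists $\delta>0$ such that $\|C_\phi^n f\|\ge \delta\, a^{-\frac{\alpha+2}{2}n}\|f\|$ for all sufficiently large $n\in\mathbb{N}$.
   Context: $\mathbb{C}_+=\{z\in\mathbb{C}:\mathrm{Re}(z)>0\}$. For $\alpha>-1$, $\mathcal{A}^2_\alpha(\mathbb{C}_+)$ is the Hilbert space of analytic $f:\mathbb{C}_+\to\mathbb{C}$ with $\|f\|^2=\frac{1}{\pi}\int_{-\infty}^{\infty}\int_0^\infty |f(x+iy)|^2x^\alpha\,dx\,dy<\infty$. $C_\phi f=f\circ\phi$ is the composition operator (bounded on this space for such $\phi$), and $C_\phi^n$ denotes its $n$-th power. *)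

theory Defs
  imports "HOL-Analysis.Analysis"
begin

definition right_half_plane :: "complex set" where
  "right_half_plane = {z. Re z > 0}"

text \<open>Squared weighted Bergman integral (1/pi) \<integral>\<integral> |f(x+iy)|^2 x^alpha dx dy,
  as an extended nonnegative real; lborel on complex is Lebesgue measure on R^2
  in the coordinates (Re z, Im z).\<close>
definition bergman_nn :: "real \<Rightarrow> (complex \<Rightarrow> complex) \<Rightarrow> ennreal" where
  "bergman_nn \<alpha> f =
     ennreal (1 / pi) * (\<integral>\<^sup>+ z \<in> right_half_plane. ennreal ((cmod (f z))\<^sup>2 * (Re z) powr \<alpha>) \<partial>lborel)"

definition bergman_space :: "real \<Rightarrow> (complex \<Rightarrow> complex) set" where
  "bergman_space \<alpha> = {f. f holomorphic_on right_half_plane \<and> bergman_nn \<alpha> f < \<infinity>}"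

definition bergman_norm :: "real \<Rightarrow> (complex \<Rightarrow> complex) \<Rightarrow> real" where
  "bergman_norm \<alpha> f = sqrt (enn2real (bergman_nn \<alpha> f))"

definition comp_op :: "(complex \<Rightarrow> complex) \<Rightarrow> (complex \<Rightarrow> complex) \<Rightarrow> (complex \<Rightarrow> complex)" where
  "comp_op \<phi> f = f \<circ> \<phi>"

end

theory Submission
  imports Defs "HOL-Complex_Analysis.Complex_Analysis"
begin

(* The iterates are affine: C_phi^n f (w) = f (a^n w + D_n) with 0 <= Re D_n <= C := Re b / (1 - a).
   Substituting z = a^n w + D_n gives ||C_phi^n f||^2 = a^(-(alpha+2) n) W(Re D_n) / pi, where W(c) is
   the integral of |f|^2 (Re z - c)^alpha over the half-plane Re z > c; also ||f||^2 = W(0) / pi.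
   So it suffices to bound W(c), for c in [0, C], from below by a fixed multiple of W(0), and to
   know that these integrals are finite.  For the lower bound, each weight (Re z - c)^alpha dominates
   min ((Re z - C)^alpha, Re z^alpha) on Re z > C, and the integral of |f|^2 against this single
   weight is positive unless f vanishes identically.  Finiteness is clear for alpha >= 0.  For
   alpha < 0 the weight is singular on the line Re z = c, and one needs bounds on the L^2 norms of f
   along vertical lines near it: these follow from Cauchy's formula on rectangles, integrated over
   all vertical translates of the rectangle. *)

lemma measurable_Complex [measurable]:
  assumes [measurable]: "f \<in> borel_measurable M" "g \<in> borel_measurable M"
  shows "(\<lambda>x. Complex (f x) (g x)) \<in> borel_measurable M"
  by (simp add: borel_measurable_complex_iff)

lemma lborel_complex_eq_distr_pair:
  "(lborel :: complex measure) = distr (lborel \<Otimes>\<^sub>M lborel) borel (\<lambda>p. Complex (fst p) (snd p))"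
proof (rule lborel_eqI)
  fix l u :: complex
  assume le: "\<And>b. b \<in> Basis \<Longrightarrow> l \<bullet> b \<le> u \<bullet> b"
  have "(\<lambda>p. Complex (fst p) (snd p)) -` box l u = box (Re l) (Re u) \<times> box (Im l) (Im u)"
    by (auto simp: in_box_complex_iff)
  then have "emeasure (distr (lborel \<Otimes>\<^sub>M lborel) borel (\<lambda>p. Complex (fst p) (snd p))) (box l u)
      = emeasure (lborel \<Otimes>\<^sub>M lborel) (box (Re l) (Re u) \<times> box (Im l) (Im u))"
    by (subst emeasure_distr) (auto simp: space_pair_measure)
  also have "\<dots> = ennreal (Re u - Re l) * ennreal (Im u - Im l)"
    using le[of 1] le[of \<i>] by (simp add: lborel.emeasure_pair_measure_Times)
  also have "\<dots> = (\<Prod>b\<in>Basis. (u - l) \<bullet> b)"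
    using le[of 1] le[of \<i>] by (simp add: Basis_complex_def ennreal_mult)
  finally show "emeasure (distr (lborel \<Otimes>\<^sub>M lborel) borel (\<lambda>p. Complex (fst p) (snd p))) (box l u)
      = (\<Prod>b\<in>Basis. (u - l) \<bullet> b)" .
qed simp

lemma nn_integral_lborel_complex:
  fixes g :: "complex \<Rightarrow> ennreal"
  assumes [measurable]: "g \<in> borel_measurable borel"
  shows "(\<integral>\<^sup>+z. g z \<partial>lborel) = (\<integral>\<^sup>+x. \<integral>\<^sup>+y. g (Complex x y) \<partial>lborel \<partial>lborel)"
proof -
  have "(\<integral>\<^sup>+z. g z \<partial>lborel) = (\<integral>\<^sup>+p. g (Complex (fst p) (snd p)) \<partial>(lborel \<Otimes>\<^sub>M lborel))"
    by (subst lborel_complex_eq_distr_pair) (simp add: nn_integral_distr)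
  also have "\<dots> = (\<integral>\<^sup>+x. \<integral>\<^sup>+y. g (Complex x y) \<partial>lborel \<partial>lborel)"
    by (simp add: lborel.nn_integral_fst[symmetric])
  finally show ?thesis .
qed

lemma borel_measurable_ennreal_indicator:
  fixes g :: "'a::topological_space \<Rightarrow> real"
  assumes "S \<in> sets borel" "continuous_on S g"
  shows "(\<lambda>z. ennreal (g z) * indicator S z) \<in> borel_measurable borel"
proof -
  have "(\<lambda>z. ennreal (indicator S z *\<^sub>R g z)) \<in> borel_measurable borel"
    using borel_measurable_continuous_on_indicator[OF assms] by simp
  also have "(\<lambda>z. ennreal (indicator S z *\<^sub>R g z)) = (\<lambda>z. ennreal (g z) * indicator S z)"
    by (auto simp: indicator_def)
  finally show ?thesis .
qed

lemma nn_integral_continuous_pos: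
  fixes g :: "'a::euclidean_space \<Rightarrow> real"
  assumes U: "open U" and g: "continuous_on U g" "\<And>z. z \<in> U \<Longrightarrow> 0 \<le> g z"
    and z0: "z0 \<in> U" "0 < g z0"
  shows "0 < (\<integral>\<^sup>+z. ennreal (g z) * indicator U z \<partial>lborel)"
proof (rule ccontr)
  assume "\<not> ?thesis"
  then have "(\<integral>\<^sup>+z. ennreal (g z) * indicator U z \<partial>lborel) = 0"
    by (simp add: not_less)
  moreover have "(\<lambda>z. ennreal (g z) * indicator U z) \<in> borel_measurable borel"
    using U g by (intro borel_measurable_ennreal_indicator) auto
  ultimately have AE_zero: "AE z in lborel. ennreal (g z) * indicator U z = 0"
    by (simp add: nn_integral_0_iff_AE)
  have "openin (top_of_set U) (U \<inter> g -` {0<..})"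
    using g(1) by (rule continuous_openin_preimage_gen) simp
  then have "open (U \<inter> g -` {0<..})"
    using U openin_open_trans by blast
  moreover have "z0 \<in> U \<inter> g -` {0<..}"
    using z0 by simp
  ultimately obtain e where e: "0 < e" "ball z0 e \<subseteq> U \<inter> g -` {0<..}"
    by (rule openE)
  have "AE z in lborel. z \<notin> ball z0 e"
    using AE_zero by (rule AE_mp[OF _ AE_I2]) (use e in \<open>auto simp: subset_iff ennreal_eq_0_iff\<close>)
  then have "emeasure lborel (ball z0 e) = 0"
    by (subst (asm) AE_iff_measurable[where N="ball z0 e"]) auto
  then show False
    using e(1) content_ball_gt_0_iff[of z0 e] by (simp add: measure_def)
qed

lemma nn_integral_real_segment:
  fixes g :: "real \<Rightarrow> ennreal"
  assumes [measurable]: "g \<in> borel_measurable borel" and "p \<noteq> q"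
  shows "ennreal \<bar>q - p\<bar> * (\<integral>\<^sup>+t. g (p + t * (q - p)) * indicator {0..1} t \<partial>lborel)
       = (\<integral>\<^sup>+s. g s * indicator (closed_segment p q) s \<partial>lborel)"
proof -
  have "p + (q - p) * t \<in> closed_segment p q \<longleftrightarrow> t \<in> {0..1}" for t
  proof -
    have "p + (q - p) * t = (1 - u) * p + u * q \<longleftrightarrow> u = t" for u
    proof -
      have "p + (q - p) * t - ((1 - u) * p + u * q) = (q - p) * (t - u)"
        by (simp add: algebra_simps)
      then show ?thesis
        using \<open>p \<noteq> q\<close> by (auto simp: eq_iff_diff_eq_0[of "p + (q - p) * t"])
    qed
    then show ?thesis
      by (auto simp: in_segment)
  qed
  then have "indicator (closed_segment p q) (p + (q - p) * t) = (indicator {0..1} t :: ennreal)" for t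
    by (simp add: indicator_def)
  then show ?thesis
    using nn_integral_real_affine[of "\<lambda>s. g s * indicator (closed_segment p q) s" "q - p" p] \<open>p \<noteq> q\<close>
    by (simp add: mult.commute)
qed

lemma exists_finite_of_nn_integral_interval:
  fixes g :: "real \<Rightarrow> ennreal"
  assumes fin: "(\<integral>\<^sup>+x. g x * indicator {l..u} x \<partial>lborel) < \<infinity>" and "l < u"
  shows "\<exists>x\<in>{l..u}. g x < \<infinity>"
proof (rule ccontr)
  assume "\<not> ?thesis"
  then have "g x = \<infinity>" if "x \<in> {l..u}" for x
    using that by (metis infinity_ennreal_def top.not_eq_extremum)
  then have "(\<integral>\<^sup>+x. g x * indicator {l..u} x \<partial>lborel) = (\<integral>\<^sup>+x. \<infinity> * indicator {l..u} x \<partial>lborel)"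
    by (intro nn_integral_cong) (simp split: split_indicator)
  also have "\<dots> = \<infinity> * emeasure lborel {l..u}"
    by (rule nn_integral_cmult_indicator) simp
  also have "\<dots> = \<infinity>"
    using \<open>l < u\<close> by (simp add: ennreal_top_mult)
  finally show False
    using fin by simp
qed

lemma nn_integral_powr_shift_finite:
  fixes \<alpha> c h :: real
  assumes "-1 < \<alpha>" "0 \<le> h"
  shows "(\<integral>\<^sup>+x. ennreal ((x - c) powr \<alpha>) * indicator {c<..<c + h} x \<partial>lborel) < \<infinity>"
proof -
  have "(\<integral>\<^sup>+x. ennreal ((x - c) powr \<alpha>) * indicator {c<..<c + h} x \<partial>lborel)
      = (\<integral>\<^sup>+x. ennreal (x powr \<alpha>) * indicator {0<..<h} x \<partial>lborel)"
    using nn_integral_real_affine[of "\<lambda>x. ennreal ((x - c) powr \<alpha>) * indicator {c<..<c + h} x" 1 c]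
    by (simp add: indicator_def)
  also have "\<dots> \<le> (\<integral>\<^sup>+x. ennreal (x powr \<alpha>) * indicator {0..h} x \<partial>lborel)"
    by (intro nn_integral_mono) (simp split: split_indicator)
  also have "\<dots> = ennreal (h powr (\<alpha> + 1) / (\<alpha> + 1))"
    using has_integral_powr_from_0[of \<alpha> h] assms by (intro nn_integral_has_integral_lebesgue') auto
  finally show ?thesis
    using ennreal_less_top le_less_trans by (metis infinity_ennreal_def)
qed

section \<open>Iterates of an affine composition operator\<close>

lemma funpow_comp_op: "(comp_op \<phi> ^^ n) f = f \<circ> (\<phi> ^^ n)"
  by (induction n) (simp_all add: comp_op_def comp_def funpow_swap1)

lemma funpow_affine:
  fixes c b :: "'a::comm_semiring_1"
  shows "((\<lambda>w. c * w + b) ^^ n) w = c ^ n * w + ((\<lambda>w. c * w + b) ^^ n) 0"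
  by (induction n) (simp_all add: algebra_simps)

lemma Re_funpow_affine_bounds:
  fixes a :: real and b :: complex
  assumes "0 \<le> a" "a < 1" "0 \<le> Re b"
  shows "0 \<le> Re (((\<lambda>w. of_real a * w + b) ^^ n) 0) \<and> Re (((\<lambda>w. of_real a * w + b) ^^ n) 0) \<le> Re b / (1 - a)"
proof (induction n)
  case (Suc n)
  define r where "r = Re (((\<lambda>w. of_real a * w + b) ^^ n) 0)"
  have "0 \<le> r" "r \<le> Re b / (1 - a)"
    using Suc by (auto simp: r_def)
  moreover have "Re (((\<lambda>w. of_real a * w + b) ^^ Suc n) 0) = a * r + Re b"
    by (simp add: r_def)
  moreover have "a * (Re b / (1 - a)) + Re b = Re b / (1 - a)"
    using assms by (simp add: field_simps)
  ultimately show ?case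
    using assms mult_left_mono[of r "Re b / (1 - a)" a] by auto
qed (use assms in simp)

definition weighted_halfplane_integral :: "real \<Rightarrow> real \<Rightarrow> (complex \<Rightarrow> complex) \<Rightarrow> ennreal" where
  "weighted_halfplane_integral \<alpha> c f =
     (\<integral>\<^sup>+z. ennreal ((cmod (f z))\<^sup>2 * (Re z - c) powr \<alpha>) * indicator {z. c < Re z} z \<partial>lborel)"

lemma bergman_nn_eq_weighted_halfplane_integral:
  "bergman_nn \<alpha> f = ennreal (1 / pi) * weighted_halfplane_integral \<alpha> 0 f"
  by (simp add: bergman_nn_def weighted_halfplane_integral_def right_half_plane_def)

lemma borel_measurable_weighted_integrand:
  assumes "continuous_on {z. c < Re z} f"
  shows "(\<lambda>z. ennreal ((cmod (f z))\<^sup>2 * (Re z - c) powr \<alpha>) * indicator {z. c < Re z} z)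
           \<in> borel_measurable borel"
  using assms
  by (intro borel_measurable_ennreal_indicator continuous_intros)
     (auto simp: open_halfspace_Re_gt)

lemma powr_scaling_jacobian:
  fixes A r \<alpha> :: real
  assumes "0 < A" "0 < r"
  shows "\<bar>1 / A\<bar> ^ 2 * ((r / A) powr \<alpha>) = A powr - (\<alpha> + 2) * r powr \<alpha>"
proof -
  have "(r / A) powr \<alpha> = A powr - \<alpha> * r powr \<alpha>"
    using assms by (subst powr_divide) (auto simp: powr_minus field_simps)
  moreover have "\<bar>1 / A\<bar> ^ 2 * A powr - \<alpha> = A powr - (\<alpha> + 2)"
    using assms by (simp add: powr_diff powr_minus_divide powr_numeral power2_eq_square field_simps)
  ultimately show ?thesis
    by (simp add: mult.assoc[symmetric])
qed

lemma bergman_nn_affine_comp: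
  fixes A :: real and D :: complex
  assumes f: "continuous_on right_half_plane f" and A: "0 < A" and D: "0 \<le> Re D"
  shows "bergman_nn \<alpha> (\<lambda>w. f (of_real A * w + D)) =
           ennreal (1 / pi) * ennreal (A powr - (\<alpha> + 2)) * weighted_halfplane_integral \<alpha> (Re D) f"
proof -
  define H where "H = {z::complex. 0 < Re z}"
  define h where "h = (\<lambda>w. ennreal ((cmod (f (of_real A * w + D)))\<^sup>2 * Re w powr \<alpha>) * indicator H w)"
  define g where "g = (\<lambda>z. ennreal ((cmod (f z))\<^sup>2 * (Re z - Re D) powr \<alpha>) * indicator {z. Re D < Re z} z)"
  have cf: "continuous_on H f"
    using f by (simp add: H_def right_half_plane_def)
  have "continuous_on H (\<lambda>w. f (of_real A * w + D))"
    using A D by (intro continuous_on_compose2[OF cf] continuous_intros)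
                 (auto simp: H_def intro!: add_pos_nonneg)
  then have h_meas: "h \<in> borel_measurable borel"
    unfolding h_def H_def
    by (intro borel_measurable_ennreal_indicator continuous_intros) (auto simp: open_halfspace_Re_gt)
  have g_meas: "g \<in> borel_measurable borel"
    unfolding g_def using D by (intro borel_measurable_weighted_integrand continuous_on_subset[OF cf]) (auto simp: H_def)
  have pointwise: "ennreal (\<bar>1 / A\<bar> ^ DIM(complex)) * h ((1 / A) *\<^sub>R z - D / of_real A)
      = ennreal (A powr - (\<alpha> + 2)) * g z" for z
  proof -
    have w: "(1 / A) *\<^sub>R z - D / of_real A = (z - D) / of_real A"
      using A by (simp add: scaleR_conv_of_real field_simps)
    have fz: "of_real A * ((z - D) / of_real A) + D = z"
      using A by (simp add: field_simps)
    show ?thesis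
      using A powr_scaling_jacobian[OF A, of "Re z - Re D" \<alpha>]
      by (cases "Re D < Re z")
         (simp_all add: h_def g_def H_def w fz zero_less_divide_iff ennreal_mult'[symmetric]
                        ennreal_mult[symmetric] mult.left_commute)
  qed
  have "bergman_nn \<alpha> (\<lambda>w. f (of_real A * w + D)) = ennreal (1 / pi) * (\<integral>\<^sup>+w. h w \<partial>lborel)"
    by (simp add: bergman_nn_def right_half_plane_def h_def H_def)
  also have "(\<integral>\<^sup>+w. h w \<partial>lborel)
      = (\<integral>\<^sup>+z. ennreal (\<bar>1 / A\<bar> ^ DIM(complex)) * h (- D / of_real A + (1 / A) *\<^sub>R z) \<partial>lborel)"
    using h_meas A
    by (subst lborel_affine[where c="1 / A" and t="- D / of_real A"])
       (simp_all add: nn_integral_density nn_integral_distr)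
  also have "\<dots> = (\<integral>\<^sup>+z. ennreal (A powr - (\<alpha> + 2)) * g z \<partial>lborel)"
    using pointwise by (simp add: algebra_simps)
  also have "\<dots> = ennreal (A powr - (\<alpha> + 2)) * weighted_halfplane_integral \<alpha> (Re D) f"
    using g_meas by (simp add: nn_integral_cmult weighted_halfplane_integral_def g_def)
  finally show ?thesis
    by (simp add: mult.assoc)
qed

lemma bergman_norm_eq:
  "bergman_norm \<alpha> f = sqrt (enn2real (weighted_halfplane_integral \<alpha> 0 f) / pi)"
  by (simp add: bergman_norm_def bergman_nn_eq_weighted_halfplane_integral enn2real_mult)

lemma bergman_norm_affine_comp:
  fixes A :: real and D :: complex
  assumes "continuous_on right_half_plane f" "0 < A" "0 \<le> Re D"
  shows "bergman_norm \<alpha> (\<lambda>w. f (of_real A * w + D)) =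
           A powr (- (\<alpha> + 2) / 2) * sqrt (enn2real (weighted_halfplane_integral \<alpha> (Re D) f) / pi)"
  using assms
  by (simp add: bergman_norm_def bergman_nn_affine_comp enn2real_mult powr_half_sqrt_powr
                real_sqrt_mult[symmetric])

lemma bergman_norm_comp_op_affine_iterate:
  fixes a :: real and b :: complex
  assumes f: "continuous_on right_half_plane f" and a: "0 < a" "a < 1" and b: "0 \<le> Re b"
  defines "\<phi> \<equiv> \<lambda>w. of_real a * w + b"
  shows "bergman_norm \<alpha> ((comp_op \<phi> ^^ n) f)
           = a powr (- ((\<alpha> + 2) / 2) * real n) * sqrt (enn2real (weighted_halfplane_integral \<alpha> (Re ((\<phi> ^^ n) 0)) f) / pi)"
proof -
  have iterate: "(comp_op \<phi> ^^ n) f = (\<lambda>w. f (of_real (a ^ n) * w + (\<phi> ^^ n) 0))"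
  proof
    fix w
    show "(comp_op \<phi> ^^ n) f w = f (of_real (a ^ n) * w + (\<phi> ^^ n) 0)"
      using funpow_affine[where c="of_real a" and b=b and n=n and w=w]
      by (simp add: funpow_comp_op \<phi>_def)
  qed
  have "real n * (- (\<alpha> + 2) / 2) = - ((\<alpha> + 2) / 2) * real n"
    by (simp add: algebra_simps)
  then have scale: "(a ^ n) powr (- (\<alpha> + 2) / 2) = a powr (- ((\<alpha> + 2) / 2) * real n)"
    using a by (simp only: powr_realpow[symmetric] powr_powr)
  show ?thesis
    unfolding iterate scale[symmetric]
    using Re_funpow_affine_bounds[of a b n] a b
    by (intro bergman_norm_affine_comp[OF f]) (simp_all add: \<phi>_def)
qed

section \<open>A uniform lower bound\<close>

lemma holomorphic_halfplane_nonzero_beyond: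
  assumes hol: "f holomorphic_on right_half_plane" and "0 \<le> C"
    and z0: "0 < Re z0" "f z0 \<noteq> 0"
  shows "\<exists>z. C < Re z \<and> f z \<noteq> 0"
proof (rule ccontr)
  assume none: "\<not> ?thesis"
  have "f z0 = 0"
  proof (rule analytic_continuation_open[where s="{z. C < Re z}" and s'=right_half_plane and f=f and g="\<lambda>_. 0" and z=z0])
    show "{z. C < Re z} \<noteq> {}"
      by (auto intro: exI[of _ "of_real (C + 1)"])
    show "connected right_half_plane"
      unfolding right_half_plane_def by (intro convex_connected convex_halfspace_Re_gt)
  qed (use none \<open>0 \<le> C\<close> z0(1) hol in \<open>auto simp: right_half_plane_def open_halfspace_Re_gt\<close>)
  with z0(2) show False by simp
qed

lemma min_powr_le_powr_shift:
  fixes x c C \<alpha> :: real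
  assumes "0 \<le> c" "c \<le> C" "C < x"
  shows "min ((x - C) powr \<alpha>) (x powr \<alpha>) \<le> (x - c) powr \<alpha>"
proof (cases "0 \<le> \<alpha>")
  case True
  then have "(x - C) powr \<alpha> \<le> (x - c) powr \<alpha>"
    using assms by (intro powr_mono2) auto
  then show ?thesis by linarith
next
  case False
  then have "x powr \<alpha> \<le> (x - c) powr \<alpha>"
    using assms by (intro powr_mono2') auto
  then show ?thesis by linarith
qed

lemma weighted_halfplane_integral_common_lower_bound:
  assumes hol: "f holomorphic_on right_half_plane" and C: "0 \<le> C"
    and z0: "0 < Re z0" "f z0 \<noteq> 0"
  shows "\<exists>J>0. \<forall>c\<in>{0..C}. J \<le> weighted_halfplane_integral \<alpha> c f"
proof -
  obtain z1 where z1: "C < Re z1" "f z1 \<noteq> 0"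
    using holomorphic_halfplane_nonzero_beyond[OF hol C z0] by blast
  define g where "g z = (cmod (f z))\<^sup>2 * min ((Re z - C) powr \<alpha>) (Re z powr \<alpha>)" for z
  have "continuous_on {z. C < Re z} f"
    using C holomorphic_on_imp_continuous_on[OF hol]
    by (rule_tac continuous_on_subset) (auto simp: right_half_plane_def)
  then have "continuous_on {z. C < Re z} g"
    unfolding g_def using C by (intro continuous_intros) auto
  then have "0 < (\<integral>\<^sup>+z. ennreal (g z) * indicator {z. C < Re z} z \<partial>lborel)"
    using z1 C by (intro nn_integral_continuous_pos) (auto simp: open_halfspace_Re_gt g_def)
  moreover have "(\<integral>\<^sup>+z. ennreal (g z) * indicator {z. C < Re z} z \<partial>lborel) \<le> weighted_halfplane_integral \<alpha> c f"
    if c: "c \<in> {0..C}" for c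
    unfolding weighted_halfplane_integral_def
  proof (intro nn_integral_mono)
    fix z :: complex
    show "ennreal (g z) * indicator {z. C < Re z} z
        \<le> ennreal ((cmod (f z))\<^sup>2 * (Re z - c) powr \<alpha>) * indicator {z. c < Re z} z"
      using c min_powr_le_powr_shift[of c C "Re z" \<alpha>]
      by (cases "C < Re z") (auto simp: g_def intro!: ennreal_leI mult_left_mono)
  qed
  ultimately show ?thesis
    by blast
qed

lemma weighted_halfplane_integral_uniform_lower_bound:
  assumes hol: "f holomorphic_on right_half_plane" and C: "0 \<le> C"
    and fin: "\<And>c. c \<in> {0..C} \<Longrightarrow> weighted_halfplane_integral \<alpha> c f < \<infinity>"
  shows "\<exists>\<delta>>0. \<forall>c\<in>{0..C}.
           \<delta> * enn2real (weighted_halfplane_integral \<alpha> 0 f) \<le> enn2real (weighted_halfplane_integral \<alpha> c f)"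
proof (cases "\<exists>z0. 0 < Re z0 \<and> f z0 \<noteq> 0")
  case False
  then have vanish: "ennreal ((cmod (f z))\<^sup>2 * (Re z - 0) powr \<alpha>) * indicator {z. 0 < Re z} z = 0" for z
    by (auto simp: indicator_def)
  have "weighted_halfplane_integral \<alpha> 0 f = (\<integral>\<^sup>+(z::complex). 0 \<partial>lborel)"
    unfolding weighted_halfplane_integral_def by (intro nn_integral_cong) (rule vanish)
  then show ?thesis
    by (intro exI[of _ 1]) simp
next
  case True
  then obtain J where J: "0 < J" "\<And>c. c \<in> {0..C} \<Longrightarrow> J \<le> weighted_halfplane_integral \<alpha> c f"
    using weighted_halfplane_integral_common_lower_bound[OF hol C] by blast
  have J_below: "enn2real J \<le> enn2real (weighted_halfplane_integral \<alpha> c f)" if "c \<in> {0..C}" for c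
    using J(2)[OF that] fin[OF that] by (simp add: enn2real_mono)
  have J_real: "0 < enn2real J"
    using J fin[of 0] C by (auto simp: enn2real_positive_iff dest: order.strict_trans1)
  have J_below_0: "enn2real J \<le> enn2real (weighted_halfplane_integral \<alpha> 0 f)"
    using J_below C by simp
  show ?thesis
  proof (intro exI[of _ "enn2real J / enn2real (weighted_halfplane_integral \<alpha> 0 f)"] conjI ballI)
    show "0 < enn2real J / enn2real (weighted_halfplane_integral \<alpha> 0 f)"
      using J_real J_below_0 by simp
    show "enn2real J / enn2real (weighted_halfplane_integral \<alpha> 0 f) * enn2real (weighted_halfplane_integral \<alpha> 0 f)
        \<le> enn2real (weighted_halfplane_integral \<alpha> c f)" if "c \<in> {0..C}" for c
      using J_below[OF that] J_real J_below_0 by simp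
  qed
qed

section \<open>Cauchy estimates on rectangles\<close>

definition segment_norm_integral :: "(complex \<Rightarrow> complex) \<Rightarrow> complex \<Rightarrow> complex \<Rightarrow> ennreal" where
  "segment_norm_integral f p q =
     ennreal (cmod (q - p)) * (\<integral>\<^sup>+t. ennreal (cmod (f (linepath p q t))) * indicator {0..1} t \<partial>lborel)"

lemma norm_contour_integral_linepath_le_segment_norm_integral:
  fixes h f :: "complex \<Rightarrow> complex"
  assumes h: "continuous_on (closed_segment p q) h" and f: "continuous_on (closed_segment p q) f"
    and d: "0 < d" and le: "\<And>w. w \<in> closed_segment p q \<Longrightarrow> d * norm (h w) \<le> cmod (f w)"
  shows "ennreal (d * norm (contour_integral (linepath p q) h)) \<le> segment_norm_integral f p q"
proof -
  define G where "G t = cmod (f (linepath p q t)) / d * cmod (q - p)" for t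
  have img: "t \<in> {0..1} \<Longrightarrow> linepath p q t \<in> closed_segment p q" for t
    using path_image_linepath[of p q] unfolding path_image_def by blast
  have hi: "((\<lambda>t. h (linepath p q t) * (q - p)) has_integral contour_integral (linepath p q) h) {0..1}"
    using contour_integrable_continuous_linepath[OF h] has_contour_integral_integral has_contour_integral_linepath
    by blast
  have cont_f: "continuous_on {0..1} (\<lambda>t. cmod (f (linepath p q t)))"
    using img by (intro continuous_intros continuous_on_compose2[OF f]) auto
  then have gi: "(G has_integral integral {0..1} (\<lambda>t. cmod (f (linepath p q t))) / d * cmod (q - p)) {0..1}"
    unfolding G_def by (intro has_integral_mult_left has_integral_divide integrable_integral integrable_continuous_interval)
  have bound: "norm (h (linepath p q t) * (q - p)) \<le> G t" if "t \<in> {0..1}" for t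
    using le[OF img[OF that]] d unfolding G_def norm_mult
    by (intro mult_right_mono) (auto simp: field_simps)
  have "norm (contour_integral (linepath p q) h)
      \<le> integral {0..1} (\<lambda>t. cmod (f (linepath p q t))) / d * cmod (q - p)"
    using has_integral_norm_bound_integral_component[OF hi gi, of 1] bound by simp
  then have "ennreal (d * norm (contour_integral (linepath p q) h))
      \<le> ennreal (cmod (q - p) * integral {0..1} (\<lambda>t. cmod (f (linepath p q t))))"
    using d by (intro ennreal_leI) (simp add: field_simps)
  also have "\<dots> = segment_norm_integral f p q"
    unfolding segment_norm_integral_def
    using integrable_continuous_interval[OF cont_f]
    by (simp add: ennreal_mult' nn_integral_has_integral_lebesgue'[OF _ integrable_integral])
  finally show ?thesis .
qed

lemma norm_contour_integral_linepath_div_le: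
  fixes f :: "complex \<Rightarrow> complex"
  assumes f: "continuous_on (closed_segment p q) f" and d: "0 < d"
    and far: "\<And>w. w \<in> closed_segment p q \<Longrightarrow> d \<le> cmod (w - z)"
  shows "ennreal (d * norm (contour_integral (linepath p q) (\<lambda>w. f w / (w - z)))) \<le> segment_norm_integral f p q"
proof (rule norm_contour_integral_linepath_le_segment_norm_integral[OF _ f d])
  have "z \<notin> closed_segment p q"
    using far d by fastforce
  then show "continuous_on (closed_segment p q) (\<lambda>w. f w / (w - z))"
    by (intro continuous_intros f) auto
  show "d * norm (f w / (w - z)) \<le> cmod (f w)" if "w \<in> closed_segment p q" for w
  proof -
    have "d * (cmod (f w) / cmod (w - z)) \<le> cmod (w - z) * (cmod (f w) / cmod (w - z))"
      using far[OF that] by (rule mult_right_mono) simp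
    also have "\<dots> = cmod (f w)"
      using d far[OF that] by auto
    finally show ?thesis
      by (simp add: norm_divide)
  qed
qed

lemma path_image_rectpath_eq_segments:
  "path_image (rectpath a b) = closed_segment a (Complex (Re b) (Im a)) \<union> closed_segment (Complex (Re b) (Im a)) b
     \<union> closed_segment b (Complex (Re a) (Im b)) \<union> closed_segment (Complex (Re a) (Im b)) a"
  by (simp add: rectpath_def Let_def path_image_join Un_assoc)

lemma contour_integral_rectpath_eq_segments:
  assumes g: "continuous_on (path_image (rectpath a b)) g"
  shows "contour_integral (rectpath a b) g = contour_integral (linepath a (Complex (Re b) (Im a))) g
      + contour_integral (linepath (Complex (Re b) (Im a)) b) g + contour_integral (linepath b (Complex (Re a) (Im b))) g
      + contour_integral (linepath (Complex (Re a) (Im b)) a) g"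
proof -
  have int: "g contour_integrable_on linepath p q" if "closed_segment p q \<subseteq> path_image (rectpath a b)" for p q
    using that by (intro contour_integrable_continuous_linepath continuous_on_subset[OF g])
  have "g contour_integrable_on linepath a (Complex (Re b) (Im a))"
    "g contour_integrable_on linepath (Complex (Re b) (Im a)) b"
    "g contour_integrable_on linepath b (Complex (Re a) (Im b))"
    "g contour_integrable_on linepath (Complex (Re a) (Im b)) a"
    by (auto simp: path_image_rectpath_eq_segments intro!: int)
  then show ?thesis
    by (simp add: rectpath_def Let_def)
qed

lemma rectpath_dist_ge:
  assumes d: "0 \<le> d" "d \<le> Re z - Re a" "d \<le> Re b - Re z" "d \<le> Im z - Im a" "d \<le> Im b - Im z"
    and w: "w \<in> path_image (rectpath a b)"
  shows "d \<le> cmod (w - z)"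
proof -
  have ab: "Re a \<le> Re b" "Im a \<le> Im b"
    using d by linarith+
  from w consider "Re w = Re a \<or> Re w = Re b" | "Im w = Im a \<or> Im w = Im b"
    unfolding path_image_rectpath[OF ab] by blast
  then show ?thesis
  proof cases
    case 1
    then show ?thesis
      using d abs_Re_le_cmod[of "w - z"] by auto
  next
    case 2
    then show ?thesis
      using d abs_Im_le_cmod[of "w - z"] by auto
  qed
qed

lemma Cauchy_rectangle_estimate:
  fixes f :: "complex \<Rightarrow> complex"
  assumes hol: "f holomorphic_on U" and U: "open U" "convex U" and sub: "cbox a b \<subseteq> U"
    and d: "0 < d" "d \<le> Re z - Re a" "d \<le> Re b - Re z" "d \<le> Im z - Im a" "d \<le> Im b - Im z"
  shows "ennreal (2 * pi * d * cmod (f z)) \<le>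
           segment_norm_integral f a (Complex (Re b) (Im a))
         + segment_norm_integral f (Complex (Re b) (Im a)) b
         + segment_norm_integral f b (Complex (Re a) (Im b))
         + segment_norm_integral f (Complex (Re a) (Im b)) a"
proof -
  define a' b' where "a' = Complex (Re b) (Im a)" and "b' = Complex (Re a) (Im b)"
  define g where "g = (\<lambda>w. f w / (w - z))"
  define P where "P = path_image (rectpath a b)"
  note far = rectpath_dist_ge[OF less_imp_le[OF d(1)] d(2-5), folded P_def]
  have P_sub: "P \<subseteq> U - {z}"
    using path_image_rectpath_subset_cbox[of a b] sub far d unfolding P_def by fastforce
  have cont_f: "continuous_on P f"
    using P_sub holomorphic_on_imp_continuous_on[OF hol] continuous_on_subset by blast
  have cont_g: "continuous_on P g"
    unfolding g_def using P_sub by (intro continuous_intros cont_f) auto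
  have "z \<in> box a b"
    using d by (simp add: in_box_complex_iff)
  moreover have "z \<in> interior U"
    using \<open>z \<in> box a b\<close> sub box_subset_cbox interior_open[OF U(1)] by blast
  ultimately have "contour_integral (rectpath a b) g = 2 * pi * \<i> * f z"
    using Cauchy_integral_formula_convex_simple[OF U(2) hol, of z "rectpath a b"] P_sub
    unfolding g_def by (intro contour_integral_unique) (simp add: P_def winding_number_rectpath)
  then have ci: "contour_integral (linepath a a') g + contour_integral (linepath a' b) g
      + contour_integral (linepath b b') g + contour_integral (linepath b' a) g = 2 * pi * \<i> * f z"
    using contour_integral_rectpath_eq_segments[OF cont_g[unfolded P_def]] by (simp add: a'_def b'_def)
  have side: "ennreal (d * norm (contour_integral (linepath p q) g)) \<le> segment_norm_integral f p q"
    if "closed_segment p q \<subseteq> P" for p q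
    unfolding g_def using that far d(1) continuous_on_subset[OF cont_f that]
    by (intro norm_contour_integral_linepath_div_le) auto
  have "2 * pi * d * cmod (f z) = d * norm (2 * pi * \<i> * f z)"
    by (simp add: norm_mult)
  also have "\<dots> \<le> d * norm (contour_integral (linepath a a') g) + d * norm (contour_integral (linepath a' b) g)
      + d * norm (contour_integral (linepath b b') g) + d * norm (contour_integral (linepath b' a) g)"
    unfolding ci[symmetric] distrib_left[symmetric] using d
    by (intro mult_left_mono norm_triangle_le add_mono order.refl) auto
  finally have "ennreal (2 * pi * d * cmod (f z)) \<le> ennreal (d * norm (contour_integral (linepath a a') g))
      + ennreal (d * norm (contour_integral (linepath a' b) g)) + ennreal (d * norm (contour_integral (linepath b b') g))
      + ennreal (d * norm (contour_integral (linepath b' a) g))"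
    using d by (simp add: ennreal_plus[symmetric] del: ennreal_plus)
  also have "\<dots> \<le> segment_norm_integral f a a' + segment_norm_integral f a' b
      + segment_norm_integral f b b' + segment_norm_integral f b' a"
    using path_image_rectpath_eq_segments[of a b] by (intro add_mono side) (auto simp: P_def a'_def b'_def)
  finally show ?thesis
    unfolding a'_def b'_def .
qed

section \<open>Mass of a holomorphic function on vertical lines\<close>

definition vertical_integral :: "(complex \<Rightarrow> ennreal) \<Rightarrow> real \<Rightarrow> ennreal" where
  "vertical_integral F x = (\<integral>\<^sup>+y. F (Complex x y) \<partial>lborel)"

lemma borel_measurable_vertical_integral [measurable]:
  assumes [measurable]: "F \<in> borel_measurable borel"
  shows "vertical_integral F \<in> borel_measurable borel"
  unfolding vertical_integral_def by measurable

lemma vertical_integral_translate: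
  assumes [measurable]: "F \<in> borel_measurable borel"
  shows "(\<integral>\<^sup>+y. F (w + \<i> * of_real y) \<partial>lborel) = vertical_integral F (Re w)"
proof -
  have "w + \<i> * of_real y = Complex (Re w) (Im w + 1 * y)" for y
    by (simp add: complex_eq_iff)
  then show ?thesis
    unfolding vertical_integral_def
    using nn_integral_real_affine[of "\<lambda>y. F (Complex (Re w) y)" 1 "Im w"] by simp
qed

lemma nn_integral_vertical_translate_linepath:
  assumes [measurable]: "F \<in> borel_measurable borel"
  shows "(\<integral>\<^sup>+y. \<integral>\<^sup>+t. F (linepath p q t + \<i> * of_real y) * indicator {0..1} t \<partial>lborel \<partial>lborel)
       = (\<integral>\<^sup>+t. vertical_integral F (Re (linepath p q t)) * indicator {0..1} t \<partial>lborel)"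
proof -
  have [measurable]: "linepath p q \<in> borel_measurable borel"
    unfolding linepath_def by measurable
  have "(\<integral>\<^sup>+y. \<integral>\<^sup>+t. F (linepath p q t + \<i> * of_real y) * indicator {0..1} t \<partial>lborel \<partial>lborel)
      = (\<integral>\<^sup>+t. \<integral>\<^sup>+y. F (linepath p q t + \<i> * of_real y) * indicator {0..1} t \<partial>lborel \<partial>lborel)"
    by (rule lborel_pair.Fubini') measurable
  also have "\<dots> = (\<integral>\<^sup>+t. vertical_integral F (Re (linepath p q t)) * indicator {0..1} t \<partial>lborel)"
    by (intro nn_integral_cong) (simp add: nn_integral_multc vertical_integral_translate)
  finally show ?thesis .
qed

lemma nn_integral_vertical_translates_vertical_segment:
  assumes [measurable]: "F \<in> borel_measurable borel" and "Re p = Re q"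
  shows "(\<integral>\<^sup>+y. ennreal (cmod (q - p)) *
            (\<integral>\<^sup>+t. F (linepath p q t + \<i> * of_real y) * indicator {0..1} t \<partial>lborel) \<partial>lborel)
       = ennreal (cmod (q - p)) * vertical_integral F (Re p)"
proof -
  have "(\<lambda>y. \<integral>\<^sup>+t. F (linepath p q t + \<i> * of_real y) * indicator {0..1} t \<partial>lborel) \<in> borel_measurable borel"
    unfolding linepath_def by measurable
  moreover have "Re (linepath p q t) = Re p" for t
    using \<open>Re p = Re q\<close> by (simp add: linepath_def algebra_simps)
  ultimately show ?thesis
    by (simp add: nn_integral_cmult nn_integral_vertical_translate_linepath nn_integral_cmult_indicator)
qed

lemma nn_integral_vertical_translates_horizontal_segment:
  assumes [measurable]: "F \<in> borel_measurable borel" and "Im p = Im q" "Re p \<noteq> Re q"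
  shows "(\<integral>\<^sup>+y. ennreal (cmod (q - p)) *
            (\<integral>\<^sup>+t. F (linepath p q t + \<i> * of_real y) * indicator {0..1} t \<partial>lborel) \<partial>lborel)
       = (\<integral>\<^sup>+s. vertical_integral F s * indicator (closed_segment (Re p) (Re q)) s \<partial>lborel)"
proof -
  have "(\<lambda>y. \<integral>\<^sup>+t. F (linepath p q t + \<i> * of_real y) * indicator {0..1} t \<partial>lborel) \<in> borel_measurable borel"
    unfolding linepath_def by measurable
  moreover have "Re (linepath p q t) = Re p + t * (Re q - Re p)" for t
    by (simp add: linepath_def algebra_simps)
  moreover have "cmod (q - p) = \<bar>Re q - Re p\<bar>"
    using \<open>Im p = Im q\<close> by (simp add: cmod_def)
  ultimately show ?thesis
    using \<open>Re p \<noteq> Re q\<close>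
    by (simp add: nn_integral_cmult nn_integral_vertical_translate_linepath nn_integral_real_segment)
qed

text \<open>The indicator makes this Borel measurable on all of \<open>\<complex>\<close>, although \<open>f\<close> is only
  continuous on the half-plane.\<close>

definition sq_norm_on_halfplane :: "(complex \<Rightarrow> complex) \<Rightarrow> complex \<Rightarrow> ennreal" where
  "sq_norm_on_halfplane f z = ennreal ((cmod (f z))\<^sup>2) * indicator right_half_plane z"

abbreviation vertical_mass :: "(complex \<Rightarrow> complex) \<Rightarrow> real \<Rightarrow> ennreal" where
  "vertical_mass f \<equiv> vertical_integral (sq_norm_on_halfplane f)"

lemma borel_measurable_sq_norm_on_halfplane [measurable]:
  assumes "continuous_on right_half_plane f"
  shows "sq_norm_on_halfplane f \<in> borel_measurable borel"
  unfolding sq_norm_on_halfplane_def using assms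
  by (intro borel_measurable_ennreal_indicator continuous_intros)
     (auto simp: right_half_plane_def open_halfspace_Re_gt)

lemma segment_norm_integral_square_translate:
  assumes "0 < Re p" "0 < Re q" "0 \<le> Re c"
  shows "segment_norm_integral (\<lambda>w. f w ^ 2) (p + c) (q + c)
      = ennreal (cmod (q - p)) * (\<integral>\<^sup>+t. sq_norm_on_halfplane f (linepath p q t + c) * indicator {0..1} t \<partial>lborel)"
proof -
  have shift: "linepath (p + c) (q + c) t = linepath p q t + c" for t
    by (simp add: linepath_def algebra_simps)
  have "0 < Re (linepath p q t + c)" if "t \<in> {0..1}" for t
  proof -
    have "0 < (1 - t) * Re p + t * Re q"
      using that assms by (cases "t = 0") (auto intro: add_nonneg_pos add_pos_nonneg)
    then show ?thesis
      using assms(3) by (simp add: linepath_def)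
  qed
  then have "(\<integral>\<^sup>+t. ennreal (cmod (f (linepath p q t + c) ^ 2)) * indicator {0..1} t \<partial>lborel)
      = (\<integral>\<^sup>+t. sq_norm_on_halfplane f (linepath p q t + c) * indicator {0..1} t \<partial>lborel)"
    by (intro nn_integral_cong)
       (auto simp: sq_norm_on_halfplane_def right_half_plane_def norm_power split: split_indicator)
  then show ?thesis
    by (simp add: segment_norm_integral_def shift)
qed

text \<open>Cauchy's estimate on the rectangle \<open>[x1, x2] \<times> [y - 1, y + 1]\<close>, with its sides written
  as translates by \<open>\<i> * y\<close> of fixed segments so that it can be integrated over \<open>y\<close>.\<close>

lemma sq_norm_on_halfplane_rectangle_estimate:
  assumes hol: "f holomorphic_on right_half_plane" and x: "0 < x1" "x1 < x" "x < x2"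
    and d: "0 < d" "d \<le> x - x1" "d \<le> x2 - x" "d \<le> 1"
  shows "ennreal (2 * pi * d) * sq_norm_on_halfplane f (Complex x y) \<le>
    (\<Sum>(p, q) \<leftarrow> [(Complex x1 (-1), Complex x2 (-1)), (Complex x2 (-1), Complex x2 1),
                  (Complex x2 1, Complex x1 1), (Complex x1 1, Complex x1 (-1))].
       ennreal (cmod (q - p)) *
         (\<integral>\<^sup>+t. sq_norm_on_halfplane f (linepath p q t + \<i> * of_real y) * indicator {0..1} t \<partial>lborel))"
proof -
  define c where "c = \<i> * of_real y"
  define a a' b b' where "a = Complex x1 (-1)" and "a' = Complex x2 (-1)"
    and "b = Complex x2 1" and "b' = Complex x1 1"
  have side: "segment_norm_integral (\<lambda>w. f w ^ 2) (p + c) (q + c)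
      = ennreal (cmod (q - p)) * (\<integral>\<^sup>+t. sq_norm_on_halfplane f (linepath p q t + c) * indicator {0..1} t \<partial>lborel)"
    if "0 < Re p" "0 < Re q" for p q
    by (rule segment_norm_integral_square_translate[OF that]) (simp add: c_def)
  have corners: "Complex (Re (b + c)) (Im (a + c)) = a' + c" "Complex (Re (a + c)) (Im (b + c)) = b' + c"
    by (simp_all add: complex_eq_iff a_def a'_def b_def b'_def c_def)
  have "ennreal (2 * pi * d * cmod (f (Complex x y) ^ 2)) \<le>
      segment_norm_integral (\<lambda>w. f w ^ 2) (a + c) (a' + c) + segment_norm_integral (\<lambda>w. f w ^ 2) (a' + c) (b + c)
    + segment_norm_integral (\<lambda>w. f w ^ 2) (b + c) (b' + c) + segment_norm_integral (\<lambda>w. f w ^ 2) (b' + c) (a + c)"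
  proof (rule Cauchy_rectangle_estimate[where U=right_half_plane, of _ "a + c" "b + c", unfolded corners])
    show "(\<lambda>w. f w ^ 2) holomorphic_on right_half_plane"
      using hol by (intro holomorphic_intros)
    show "open right_half_plane" "convex right_half_plane"
      by (simp_all add: right_half_plane_def open_halfspace_Re_gt convex_halfspace_Re_gt)
    show "cbox (a + c) (b + c) \<subseteq> right_half_plane"
      using x by (auto simp: right_half_plane_def in_cbox_complex_iff a_def b_def c_def)
  qed (use d in \<open>simp_all add: a_def b_def c_def\<close>)
  moreover have "ennreal (2 * pi * d) * sq_norm_on_halfplane f (Complex x y)
      = ennreal (2 * pi * d * cmod (f (Complex x y) ^ 2))"
    using x d by (simp add: sq_norm_on_halfplane_def right_half_plane_def norm_power ennreal_mult)
  ultimately show ?thesis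
    using x by (simp add: side[unfolded c_def] a_def a'_def b_def b'_def c_def add.assoc)
qed

lemma vertical_mass_rectangle_bound:
  assumes hol: "f holomorphic_on right_half_plane" and x: "0 < x1" "x1 < x" "x < x2"
    and d: "0 < d" "d \<le> x - x1" "d \<le> x2 - x" "d \<le> 1"
  shows "ennreal (2 * pi * d) * vertical_mass f x
           \<le> 2 * (\<integral>\<^sup>+s. vertical_mass f s * indicator {x1..x2} s \<partial>lborel) + 2 * vertical_mass f x1 + 2 * vertical_mass f x2"
proof -
  define F where "F = sq_norm_on_halfplane f"
  have [measurable]: "F \<in> borel_measurable borel"
    unfolding F_def using holomorphic_on_imp_continuous_on[OF hol] by measurable
  define T where "T p q y = ennreal (cmod (q - p)) *
      (\<integral>\<^sup>+t. F (linepath p q t + \<i> * of_real y) * indicator {0..1} t \<partial>lborel)" for p q y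
  have [measurable]: "T p q \<in> borel_measurable borel" for p q
    unfolding T_def linepath_def by measurable
  define I where "I = (\<integral>\<^sup>+s. vertical_integral F s * indicator {x1..x2} s \<partial>lborel)"
  have horizontal: "(\<integral>\<^sup>+y. T (Complex x1 (-1)) (Complex x2 (-1)) y \<partial>lborel) = I"
    "(\<integral>\<^sup>+y. T (Complex x2 1) (Complex x1 1) y \<partial>lborel) = I"
    unfolding T_def I_def using x
    by (simp_all add: nn_integral_vertical_translates_horizontal_segment closed_segment_eq_real_ivl)
  have vertical: "(\<integral>\<^sup>+y. T (Complex x2 (-1)) (Complex x2 1) y \<partial>lborel) = 2 * vertical_integral F x2"
    "(\<integral>\<^sup>+y. T (Complex x1 1) (Complex x1 (-1)) y \<partial>lborel) = 2 * vertical_integral F x1"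
    unfolding T_def
    using nn_integral_vertical_translates_vertical_segment[of F "Complex x2 (-1)" "Complex x2 1"]
      nn_integral_vertical_translates_vertical_segment[of F "Complex x1 1" "Complex x1 (-1)"]
    by (simp_all add: cmod_def)
  have "ennreal (2 * pi * d) * vertical_mass f x = (\<integral>\<^sup>+y. ennreal (2 * pi * d) * F (Complex x y) \<partial>lborel)"
    unfolding vertical_integral_def F_def by (rule nn_integral_cmult[symmetric]) (simp add: F_def[symmetric])
  also have "\<dots> \<le> (\<integral>\<^sup>+y. (\<Sum>(p, q) \<leftarrow> [(Complex x1 (-1), Complex x2 (-1)), (Complex x2 (-1), Complex x2 1),
                  (Complex x2 1, Complex x1 1), (Complex x1 1, Complex x1 (-1))]. T p q y) \<partial>lborel)"
    unfolding F_def T_def by (intro nn_integral_mono sq_norm_on_halfplane_rectangle_estimate[OF hol x d])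
  also have "\<dots> = 2 * I + 2 * vertical_integral F x1 + 2 * vertical_integral F x2"
    by (simp add: nn_integral_add horizontal vertical mult_2 mult_2_right algebra_simps)
  finally show ?thesis
    unfolding F_def I_def .
qed

lemma weighted_halfplane_integral_eq_vertical_mass:
  assumes f: "continuous_on right_half_plane f"
  shows "weighted_halfplane_integral \<alpha> 0 f
           = (\<integral>\<^sup>+x. ennreal (x powr \<alpha>) * vertical_mass f x * indicator {0<..} x \<partial>lborel)"
proof -
  have [measurable]: "sq_norm_on_halfplane f \<in> borel_measurable borel"
    using f by measurable
  have f': "continuous_on {z. 0 < Re z} f"
    using f by (simp add: right_half_plane_def)
  have "weighted_halfplane_integral \<alpha> 0 f = (\<integral>\<^sup>+x. \<integral>\<^sup>+y. ennreal ((cmod (f (Complex x y)))\<^sup>2 * x powr \<alpha>)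
      * indicator {z. 0 < Re z} (Complex x y) \<partial>lborel \<partial>lborel)"
    unfolding weighted_halfplane_integral_def
    using borel_measurable_weighted_integrand[OF f', of \<alpha>] by (simp add: nn_integral_lborel_complex)
  also have "\<dots> = (\<integral>\<^sup>+x. ennreal (x powr \<alpha>) * vertical_mass f x * indicator {0<..} x \<partial>lborel)"
  proof (intro nn_integral_cong)
    fix x :: real
    show "(\<integral>\<^sup>+y. ennreal ((cmod (f (Complex x y)))\<^sup>2 * x powr \<alpha>) * indicator {z. 0 < Re z} (Complex x y) \<partial>lborel)
        = ennreal (x powr \<alpha>) * vertical_mass f x * indicator {0<..} x"
    proof (cases "0 < x")
      case True
      then have "(\<integral>\<^sup>+y. ennreal ((cmod (f (Complex x y)))\<^sup>2 * x powr \<alpha>) * indicator {z. 0 < Re z} (Complex x y) \<partial>lborel)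
          = (\<integral>\<^sup>+y. ennreal (x powr \<alpha>) * sq_norm_on_halfplane f (Complex x y) \<partial>lborel)"
        by (intro nn_integral_cong)
           (simp add: sq_norm_on_halfplane_def right_half_plane_def ennreal_mult' mult.commute)
      also have "\<dots> = ennreal (x powr \<alpha>) * vertical_mass f x"
        unfolding vertical_integral_def by (rule nn_integral_cmult) measurable
      finally show ?thesis
        using True by simp
    qed simp
  qed
  finally show ?thesis .
qed

lemma min_powr_le_powr_interval:
  fixes x l u \<alpha> :: real
  assumes "0 < l" "l \<le> x" "x \<le> u"
  shows "min (l powr \<alpha>) (max l u powr \<alpha>) \<le> x powr \<alpha>"
proof (cases "0 \<le> \<alpha>")
  case True
  then have "l powr \<alpha> \<le> x powr \<alpha>"
    using assms by (intro powr_mono2) auto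
  then show ?thesis by linarith
next
  case False
  then have "max l u powr \<alpha> \<le> x powr \<alpha>"
    using assms by (intro powr_mono2') auto
  then show ?thesis by linarith
qed

lemma nn_integral_vertical_mass_finite:
  assumes f: "continuous_on right_half_plane f" and l: "0 < l"
    and fin: "weighted_halfplane_integral \<alpha> 0 f < \<infinity>"
  shows "(\<integral>\<^sup>+x. vertical_mass f x * indicator {l..u} x \<partial>lborel) < \<infinity>"
proof -
  define m where "m = min (l powr \<alpha>) (max l u powr \<alpha>)"
  have m: "0 < m"
    using l by (simp add: m_def)
  have m_le: "m \<le> x powr \<alpha>" if "x \<in> {l..u}" for x
    unfolding m_def using that l by (intro min_powr_le_powr_interval) auto
  have [measurable]: "sq_norm_on_halfplane f \<in> borel_measurable borel"
    using f by measurable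
  have "(\<integral>\<^sup>+x. vertical_mass f x * indicator {l..u} x \<partial>lborel)
      \<le> (\<integral>\<^sup>+x. ennreal (1 / m) * (ennreal (x powr \<alpha>) * vertical_mass f x * indicator {0<..} x) \<partial>lborel)"
  proof (intro nn_integral_mono)
    fix x :: real
    show "vertical_mass f x * indicator {l..u} x
        \<le> ennreal (1 / m) * (ennreal (x powr \<alpha>) * vertical_mass f x * indicator {0<..} x)"
    proof (cases "x \<in> {l..u}")
      case True
      then have "1 \<le> ennreal (1 / m) * ennreal (x powr \<alpha>)"
        using m m_le[OF True] by (simp add: ennreal_mult'[symmetric] ennreal_1[symmetric] del: ennreal_1)
      then have "vertical_mass f x \<le> ennreal (1 / m) * ennreal (x powr \<alpha>) * vertical_mass f x"
        using mult_right_mono[of 1 _ "vertical_mass f x"] by simp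
      then show ?thesis
        using True l by (simp add: mult.assoc)
    qed simp
  qed
  also have "\<dots> = ennreal (1 / m) * weighted_halfplane_integral \<alpha> 0 f"
    by (simp add: weighted_halfplane_integral_eq_vertical_mass[OF f] nn_integral_cmult)
  also have "\<dots> < \<infinity>"
    using fin by (simp add: ennreal_mult_less_top)
  finally show ?thesis .
qed

text \<open>The vertical sides of the rectangles are placed on lines of finite mass; such lines exist
  in every interval because the weighted integral is finite.\<close>

lemma vertical_mass_bounded:
  assumes hol: "f holomorphic_on right_half_plane" and c: "0 < c"
    and fin: "weighted_halfplane_integral \<alpha> 0 f < \<infinity>"
  shows "\<exists>K<\<infinity>. \<forall>x\<in>{c..2*c}. vertical_mass f x \<le> K"
proof -
  have f: "continuous_on right_half_plane f"
    using hol by (rule holomorphic_on_imp_continuous_on)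
  note interval_finite = nn_integral_vertical_mass_finite[OF f _ fin]
  obtain x1 where x1: "x1 \<in> {c/4..c/2}" "vertical_mass f x1 < \<infinity>"
    using exists_finite_of_nn_integral_interval[OF interval_finite[of "c/4" "c/2"]] c by auto
  obtain x2 where x2: "x2 \<in> {5*c/2..3*c}" "vertical_mass f x2 < \<infinity>"
    using exists_finite_of_nn_integral_interval[OF interval_finite[of "5*c/2" "3*c"]] c by auto
  define d where "d = min (c/2) 1"
  define R where "R = 2 * (\<integral>\<^sup>+s. vertical_mass f s * indicator {x1..x2} s \<partial>lborel)
      + 2 * vertical_mass f x1 + 2 * vertical_mass f x2"
  have R_fin: "R < \<infinity>"
    using interval_finite[of x1 x2] x1 x2 c by (simp add: R_def ennreal_mult_less_top)
  have d: "0 < d" "d \<le> c/2" "d \<le> 1"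
    using c by (auto simp: d_def)
  have "vertical_mass f x \<le> ennreal (1 / (2 * pi * d)) * R" if x: "x \<in> {c..2*c}" for x
  proof -
    have "ennreal (2 * pi * d) * vertical_mass f x \<le> R"
      unfolding R_def using x x1 x2 c d by (intro vertical_mass_rectangle_bound[OF hol]) auto
    then have "ennreal (1 / (2 * pi * d)) * (ennreal (2 * pi * d) * vertical_mass f x) \<le> ennreal (1 / (2 * pi * d)) * R"
      by (rule mult_left_mono) simp
    then show ?thesis
      using d by (simp add: ennreal_mult[symmetric] mult.assoc[symmetric])
  qed
  then show ?thesis
    using R_fin by (intro exI[of _ "ennreal (1 / (2 * pi * d)) * R"]) (auto simp: ennreal_mult_less_top)
qed

section \<open>Finiteness of the shifted weighted integrals\<close>

lemma powr_shift_le_powr: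
  fixes x c \<alpha> :: real
  assumes "\<alpha> \<le> 0" "0 < c" "2 * c \<le> x"
  shows "(x - c) powr \<alpha> \<le> 2 powr - \<alpha> * x powr \<alpha>"
proof -
  have "(x - c) powr \<alpha> \<le> (x / 2) powr \<alpha>"
    using assms by (intro powr_mono2') auto
  also have "\<dots> = 2 powr - \<alpha> * x powr \<alpha>"
    using assms by (simp add: powr_divide powr_minus_divide)
  finally show ?thesis .
qed

lemma nn_integral_strip_weighted_finite:
  assumes hol: "f holomorphic_on right_half_plane" and \<alpha>: "-1 < \<alpha>" and c: "0 < c"
    and fin: "weighted_halfplane_integral \<alpha> 0 f < \<infinity>"
  shows "(\<integral>\<^sup>+z. ennreal ((Re z - c) powr \<alpha>) * indicator {c<..<2*c} (Re z) * sq_norm_on_halfplane f z \<partial>lborel) < \<infinity>"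
proof -
  have [measurable]: "sq_norm_on_halfplane f \<in> borel_measurable borel"
    using holomorphic_on_imp_continuous_on[OF hol] by measurable
  obtain K where K: "K < \<infinity>" "\<And>x. x \<in> {c..2*c} \<Longrightarrow> vertical_mass f x \<le> K"
    using vertical_mass_bounded[OF hol c fin] by blast
  have "(\<integral>\<^sup>+z. ennreal ((Re z - c) powr \<alpha>) * indicator {c<..<2*c} (Re z) * sq_norm_on_halfplane f z \<partial>lborel)
      = (\<integral>\<^sup>+x. \<integral>\<^sup>+y. ennreal ((x - c) powr \<alpha>) * indicator {c<..<2*c} x * sq_norm_on_halfplane f (Complex x y)
          \<partial>lborel \<partial>lborel)"
    by (subst nn_integral_lborel_complex) simp_all
  also have "\<dots> = (\<integral>\<^sup>+x. ennreal ((x - c) powr \<alpha>) * indicator {c<..<2*c} x * vertical_mass f x \<partial>lborel)"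
    unfolding vertical_integral_def by (intro nn_integral_cong) (simp add: nn_integral_cmult)
  also have "\<dots> \<le> (\<integral>\<^sup>+x. ennreal ((x - c) powr \<alpha>) * indicator {c<..<c + c} x * K \<partial>lborel)"
    using K(2) by (intro nn_integral_mono) (auto intro: mult_left_mono split: split_indicator)
  also have "\<dots> = (\<integral>\<^sup>+x. ennreal ((x - c) powr \<alpha>) * indicator {c<..<c + c} x \<partial>lborel) * K"
    by (rule nn_integral_multc) measurable
  also have "\<dots> < \<infinity>"
    using nn_integral_powr_shift_finite[of \<alpha> c c] \<alpha> c K(1) by (simp add: ennreal_mult_less_top)
  finally show ?thesis .
qed

lemma weighted_integrand_shift_le:
  assumes "\<alpha> \<le> 0" "0 < c"
  shows "ennreal ((cmod (f z))\<^sup>2 * (Re z - c) powr \<alpha>) * indicator {z. c < Re z} z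
      \<le> ennreal (2 powr - \<alpha>) * (ennreal ((cmod (f z))\<^sup>2 * Re z powr \<alpha>) * indicator {z. 0 < Re z} z)
        + ennreal ((Re z - c) powr \<alpha>) * indicator {c<..<2*c} (Re z) * sq_norm_on_halfplane f z"
proof (cases "c < Re z \<and> Re z < 2 * c")
  case True
  then show ?thesis
    using assms by (auto simp: sq_norm_on_halfplane_def right_half_plane_def ennreal_mult' mult.commute
                         intro: add_increasing)
next
  case False
  show ?thesis
  proof (cases "c < Re z")
    case True
    with False have far: "2 * c \<le> Re z"
      by simp
    have "(cmod (f z))\<^sup>2 * (Re z - c) powr \<alpha> \<le> 2 powr - \<alpha> * ((cmod (f z))\<^sup>2 * Re z powr \<alpha>)"
      using mult_left_mono[OF powr_shift_le_powr[OF assms far], of "(cmod (f z))\<^sup>2"] by (simp add: mult_ac)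
    then have "ennreal ((cmod (f z))\<^sup>2 * (Re z - c) powr \<alpha>)
        \<le> ennreal (2 powr - \<alpha>) * ennreal ((cmod (f z))\<^sup>2 * Re z powr \<alpha>)"
      by (simp add: ennreal_mult'[symmetric] ennreal_leI)
    then show ?thesis
      using True assms by (auto intro: add_increasing2)
  qed simp
qed

lemma weighted_halfplane_integral_shift_finite_nonpos:
  assumes hol: "f holomorphic_on right_half_plane" and \<alpha>: "-1 < \<alpha>" "\<alpha> \<le> 0" and c: "0 < c"
    and fin: "weighted_halfplane_integral \<alpha> 0 f < \<infinity>"
  shows "weighted_halfplane_integral \<alpha> c f < \<infinity>"
proof -
  have f: "continuous_on right_half_plane f"
    using hol by (rule holomorphic_on_imp_continuous_on)
  have [measurable]: "sq_norm_on_halfplane f \<in> borel_measurable borel"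
    using f by measurable
  have W0_meas [measurable]: "(\<lambda>z. ennreal ((cmod (f z))\<^sup>2 * (Re z - 0) powr \<alpha>) * indicator {z. 0 < Re z} z)
      \<in> borel_measurable borel"
    using f by (intro borel_measurable_weighted_integrand) (simp add: right_half_plane_def)
  define S where "S z = ennreal ((Re z - c) powr \<alpha>) * indicator {c<..<2*c} (Re z) * sq_norm_on_halfplane f z" for z
  have [measurable]: "S \<in> borel_measurable borel"
    unfolding S_def by measurable
  have "weighted_halfplane_integral \<alpha> c f \<le> (\<integral>\<^sup>+z. ennreal (2 powr - \<alpha>) *
      (ennreal ((cmod (f z))\<^sup>2 * (Re z - 0) powr \<alpha>) * indicator {z. 0 < Re z} z) + S z \<partial>lborel)"
    unfolding weighted_halfplane_integral_def S_def
    using weighted_integrand_shift_le[OF \<alpha>(2) c] by (intro nn_integral_mono) simp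
  also have "\<dots> = (\<integral>\<^sup>+z. ennreal (2 powr - \<alpha>) *
      (ennreal ((cmod (f z))\<^sup>2 * (Re z - 0) powr \<alpha>) * indicator {z. 0 < Re z} z) \<partial>lborel) + (\<integral>\<^sup>+z. S z \<partial>lborel)"
    by (rule nn_integral_add) measurable
  also have "\<dots> = ennreal (2 powr - \<alpha>) * weighted_halfplane_integral \<alpha> 0 f + (\<integral>\<^sup>+z. S z \<partial>lborel)"
    unfolding weighted_halfplane_integral_def using W0_meas by (subst nn_integral_cmult) simp_all
  also have "\<dots> < \<infinity>"
    using fin nn_integral_strip_weighted_finite[OF hol \<alpha>(1) c fin] by (simp add: S_def ennreal_mult_less_top)
  finally show ?thesis .
qed

lemma weighted_halfplane_integral_shift_finite:
  assumes hol: "f holomorphic_on right_half_plane" and \<alpha>: "-1 < \<alpha>" and c: "0 \<le> c"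
    and fin: "weighted_halfplane_integral \<alpha> 0 f < \<infinity>"
  shows "weighted_halfplane_integral \<alpha> c f < \<infinity>"
proof (cases "0 \<le> \<alpha>")
  case True
  have "weighted_halfplane_integral \<alpha> c f \<le> weighted_halfplane_integral \<alpha> 0 f"
    unfolding weighted_halfplane_integral_def
  proof (intro nn_integral_mono)
    fix z :: complex
    have "(cmod (f z))\<^sup>2 * (Re z - c) powr \<alpha> \<le> (cmod (f z))\<^sup>2 * Re z powr \<alpha>" if "c < Re z"
      using True c that by (intro mult_left_mono powr_mono2) auto
    then show "ennreal ((cmod (f z))\<^sup>2 * (Re z - c) powr \<alpha>) * indicator {z. c < Re z} z
        \<le> ennreal ((cmod (f z))\<^sup>2 * (Re z - 0) powr \<alpha>) * indicator {z. 0 < Re z} z"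
      using c by (auto intro: ennreal_leI split: split_indicator)
  qed
  then show ?thesis
    using fin by (rule le_less_trans)
next
  case False
  then show ?thesis
    using weighted_halfplane_integral_shift_finite_nonpos[OF hol \<alpha> _ _ fin] fin c
    by (cases "c = 0") auto
qed

theorem mainTheorem2:
  fixes \<alpha> a :: real and b :: complex and f :: "complex \<Rightarrow> complex"
  assumes "\<alpha> > -1" and "0 < a" and "a < 1" and "Re b \<ge> 0"
    and "f \<in> bergman_space \<alpha>"
  shows "\<exists>\<delta>>0. \<forall>\<^sub>F n in sequentially.
           bergman_norm \<alpha> ((comp_op (\<lambda>w. complex_of_real a * w + b) ^^ n) f)
             \<ge> \<delta> * a powr (- ((\<alpha> + 2) / 2) * real n) * bergman_norm \<alpha> f"
proof -
  define \<phi> where "\<phi> = (\<lambda>w. complex_of_real a * w + b)"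
  define C where "C = Re b / (1 - a)"
  have hol: "f holomorphic_on right_half_plane" and fin: "weighted_halfplane_integral \<alpha> 0 f < \<infinity>"
    using assms(5)
    by (auto simp: bergman_space_def bergman_nn_eq_weighted_halfplane_integral ennreal_mult_less_top
                   infinity_ennreal_def)
  have "0 \<le> C"
    using assms by (simp add: C_def)
  then obtain \<delta> where \<delta>: "0 < \<delta>" and lower: "\<And>c. c \<in> {0..C} \<Longrightarrow>
      \<delta> * enn2real (weighted_halfplane_integral \<alpha> 0 f) \<le> enn2real (weighted_halfplane_integral \<alpha> c f)"
    using weighted_halfplane_integral_uniform_lower_bound[OF hol]
      weighted_halfplane_integral_shift_finite[OF hol assms(1) _ fin] by (metis atLeastAtMost_iff)
  have below: "sqrt \<delta> * bergman_norm \<alpha> f \<le> sqrt (enn2real (weighted_halfplane_integral \<alpha> (Re ((\<phi> ^^ n) 0)) f) / pi)" for n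
    using lower[of "Re ((\<phi> ^^ n) 0)"] Re_funpow_affine_bounds[of a b n] assms
    by (simp add: \<phi>_def C_def bergman_norm_eq real_sqrt_mult[symmetric] divide_right_mono)
  have "sqrt \<delta> * a powr (- ((\<alpha> + 2) / 2) * real n) * bergman_norm \<alpha> f \<le> bergman_norm \<alpha> ((comp_op \<phi> ^^ n) f)" for n
    using mult_left_mono[OF below[of n], of "a powr (- ((\<alpha> + 2) / 2) * real n)"]
      bergman_norm_comp_op_affine_iterate[OF holomorphic_on_imp_continuous_on[OF hol] assms(2-4)]
    by (simp add: \<phi>_def mult_ac)
  then show ?thesis
    using \<delta> by (intro exI[of _ "sqrt \<delta>"]) (simp add: \<phi>_def always_eventually)
qed

end
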